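(* Let $(X,d,G)$ be a $G$-system, $\{F_n\}$ a Følner sequence of $G$, and $Z$ a nonempty subset of $X$. Then: (1) if $h_{top}(G,Z,\{F_n\})=\infty$ and $\overline{\mathrm{mdim}}_M(G,Z,\{F_n\},d)<\infty$, then $\overline{D}_M(G,Z,\{F_n\},d)\le1\le D(G,Z,\{F_n\})$; (2) if $0<\overline{\mathrm{mdim}}_M(G,Z,\{F_n\},d)<\infty$, then $\overline{D}_M(G,Z,\{F_n\},d)=1=D(G,Z,\{F_n\})$.
   Context: $G$ is a countably infinite discrete amenable group; $(X,d,G)$ a compact metric space with continuous $G$-action by homeomorphisms; $\{F_n\}$ nonempty finite subsets of $G$ with $|gF_n\triangle F_n|/|F_n|\to0$ for all $g$. $d_F(x,y)=\max_{g\in F}d(gx,gy)$; $s(Z,d_F,\epsilon)$ maximal cardinality of a subset of $Z$ with pairwise $d_F$-distances $>\epsilon$; $h_{top}(G,Z,d,\{F_n\},\epsilon)=\limsup_n\frac1{|F_n|}\log s(Z,d_{F_n},\epsilon)$ and $h_{top}(G,Z,\{F_n\})=\lim_{\epsilon\to0}h_{top}(G,Z,d,\{F_n\},\epsilon)$. For $s>0$: $h_{top}(G,Z,s,\{F_n\})=\lim_{\epsilon\to0}\limsup_n\frac{\log s(Z,d_{F_n},\epsilon)}{|F_n|^s}$ and the entropy dimension is $D(G,Z,\{F_n\})=\inf\{s>0:h_{top}(G,Z,s,\{F_n\})=0\}$; $\overline{\mathrm{mdim}}_M(G,Z,\{F_n\},s,d)=\limsup_{\epsilon\to0}h_{top}(G,Z,d,\{F_n\},\epsilon)/(\log\frac1\epsilon)^s$,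 $\overline{\mathrm{mdim}}_M(G,Z,\{F_n\},d)$ is the case $s=1$, and $\overline{D}_M(G,Z,\{F_n\},d)=\inf\{s>0:\overline{\mathrm{mdim}}_M(G,Z,\{F_n\},s,d)=0\}$. *)

theory Defs
  imports "HOL-Analysis.Analysis" "HOL-Algebra.Group_Action" "HOL-Library.Liminf_Limsup"
begin

definition folner :: "('g, 'b) monoid_scheme \<Rightarrow> (nat \<Rightarrow> 'g set) \<Rightarrow> bool" where
  "folner G F \<longleftrightarrow>
     (\<forall>n. F n \<subseteq> carrier G \<and> finite (F n) \<and> F n \<noteq> {}) \<and>
     (\<forall>g\<in>carrier G.
        (\<lambda>n. real (card (((g <#\<^bsub>G\<^esub> F n) - F n) \<union> (F n - (g <#\<^bsub>G\<^esub> F n))))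
             / real (card (F n))) \<longlonglongrightarrow> 0)"

definition amenable :: "('g, 'b) monoid_scheme \<Rightarrow> bool" where
  "amenable G \<longleftrightarrow> (\<exists>F. folner G F)"

definition dF :: "('g \<Rightarrow> 'x \<Rightarrow> 'x) \<Rightarrow> 'g set \<Rightarrow> 'x::metric_space \<Rightarrow> 'x \<Rightarrow> real" where
  "dF \<phi> F x y = Max ((\<lambda>g. dist (\<phi> g x) (\<phi> g y)) ` F)"

definition sep_num :: "('g \<Rightarrow> 'x \<Rightarrow> 'x) \<Rightarrow> 'g set \<Rightarrow> 'x::metric_space set \<Rightarrow> real \<Rightarrow> real" where
  "sep_num \<phi> F Z eps = Sup {real (card S) | S. S \<subseteq> Z \<and> finite S \<and>
        (\<forall>x\<in>S. \<forall>y\<in>S. x \<noteq> y \<longrightarrow> dF \<phi> F x y > eps)}"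

definition htop_eps :: "('g \<Rightarrow> 'x \<Rightarrow> 'x) \<Rightarrow> (nat \<Rightarrow> 'g set) \<Rightarrow> 'x::metric_space set \<Rightarrow> real \<Rightarrow> ereal" where
  "htop_eps \<phi> F Z eps = limsup (\<lambda>n. ereal (ln (sep_num \<phi> (F n) Z eps) / real (card (F n))))"

definition htop :: "('g \<Rightarrow> 'x \<Rightarrow> 'x) \<Rightarrow> (nat \<Rightarrow> 'g set) \<Rightarrow> 'x::metric_space set \<Rightarrow> ereal" where
  "htop \<phi> F Z = Lim (at_right 0) (htop_eps \<phi> F Z)"

definition htop_s :: "('g \<Rightarrow> 'x \<Rightarrow> 'x) \<Rightarrow> (nat \<Rightarrow> 'g set) \<Rightarrow> 'x::metric_space set \<Rightarrow> real \<Rightarrow> ereal" where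
  "htop_s \<phi> F Z s = Lim (at_right 0)
     (\<lambda>eps. limsup (\<lambda>n. ereal (ln (sep_num \<phi> (F n) Z eps) / (real (card (F n)) powr s))))"

definition entropy_dim :: "('g \<Rightarrow> 'x \<Rightarrow> 'x) \<Rightarrow> (nat \<Rightarrow> 'g set) \<Rightarrow> 'x::metric_space set \<Rightarrow> ereal" where
  "entropy_dim \<phi> F Z = Inf (ereal ` {s. s > 0 \<and> htop_s \<phi> F Z s = 0})"

definition mdim_M_s :: "('g \<Rightarrow> 'x \<Rightarrow> 'x) \<Rightarrow> (nat \<Rightarrow> 'g set) \<Rightarrow> 'x::metric_space set \<Rightarrow> real \<Rightarrow> ereal" where
  "mdim_M_s \<phi> F Z s = Limsup (at_right 0) (\<lambda>eps. htop_eps \<phi> F Z eps / ereal ((ln (1 / eps)) powr s))"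

definition mdim_M :: "('g \<Rightarrow> 'x \<Rightarrow> 'x) \<Rightarrow> (nat \<Rightarrow> 'g set) \<Rightarrow> 'x::metric_space set \<Rightarrow> ereal" where
  "mdim_M \<phi> F Z = Limsup (at_right 0) (\<lambda>eps. htop_eps \<phi> F Z eps / ereal (ln (1 / eps)))"

definition D_M :: "('g \<Rightarrow> 'x \<Rightarrow> 'x) \<Rightarrow> (nat \<Rightarrow> 'g set) \<Rightarrow> 'x::metric_space set \<Rightarrow> ereal" where
  "D_M \<phi> F Z = Inf (ereal ` {s. s > 0 \<and> mdim_M_s \<phi> F Z s = 0})"

end

theory Submission
  imports Defs "HOL-Real_Asymp.Real_Asymp"
begin

(* Fix eps > 0 and cover the compact space X by K balls of radius eps/2. Coding a point by the
   balls visited by its orbit over F_n shows that an (F_n, eps)-separated set has at most K^|F_n|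
   points, so ln s(Z, d_{F_n}, eps) grows at most linearly in |F_n|. Since |F_n| tends to infinity
   for a Folner sequence of an infinite group, normalising by |F_n|^s with s > 1 gives 0, while for
   s <= 1 the normalised quantity dominates htop_eps, which increases to htop as eps decreases.
   On the metric side, htop_eps / ln(1/eps)^s is antitone in s and its Limsup vanishes above every
   exponent where it is finite; the exponent s = 0 shows that finite entropy forces zero metric
   mean dimension. *)

lemma tendsto_at_right_SUP_antimono:
  fixes f :: "real \<Rightarrow> 'a::{complete_linorder, linorder_topology}"
  assumes antimono: "\<And>a b. x < a \<Longrightarrow> a \<le> b \<Longrightarrow> f b \<le> f a"
  shows "(f \<longlongrightarrow> (SUP e\<in>{x<..}. f e)) (at_right x)"
proof (rule order_tendstoI)
  fix y assume "y < (SUP e\<in>{x<..}. f e)"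
  then obtain e0 where e0: "x < e0" "y < f e0" by (auto simp: less_SUP_iff)
  show "\<forall>\<^sub>F e in at_right x. y < f e"
    unfolding eventually_at_right_field
    using e0 antimono by (intro exI[of _ e0]) (auto intro: less_le_trans)
next
  fix y assume "(SUP e\<in>{x<..}. f e) < y"
  then have "f e < y" if "x < e" for e
    using that by (metis SUP_upper greaterThan_iff le_less_trans)
  then show "\<forall>\<^sub>F e in at_right x. f e < y"
    by (blast intro: eventually_mono[OF eventually_at_right_less])
qed

lemma Inf_ereal_le_if_Ioi_subset:
  assumes "{a<..} \<subseteq> A"
  shows "Inf (ereal ` A) \<le> ereal a"
proof (rule dense_ge)
  fix y assume "ereal a < y"
  then show "Inf (ereal ` A) \<le> y"
    using assms by (cases y) (auto intro: Inf_lower)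
qed

lemma Limsup_ereal_eq_0_if_squeezed:
  assumes "F \<noteq> bot" "\<forall>\<^sub>F x in F. 0 \<le> f x \<and> f x \<le> g x" "(g \<longlongrightarrow> 0) F"
  shows "Limsup F (\<lambda>x. ereal (f x)) = 0"
proof -
  have "(f \<longlongrightarrow> 0) F"
    using assms(2) by (intro tendsto_sandwich[OF _ _ tendsto_const assms(3)]) (auto elim: eventually_mono)
  then have "((\<lambda>x. ereal (f x)) \<longlongrightarrow> 0) F"
    by (metis tendsto_ereal zero_ereal_def)
  then show ?thesis using lim_imp_Limsup[OF assms(1)] by blast
qed

lemma ln_inverse_at_top: "filterlim (\<lambda>e::real. ln (1 / e)) at_top (at_right 0)"
  by real_asymp

lemma eventually_at_right_0_ln_inverse_ge: "\<forall>\<^sub>F e in at_right (0::real). 0 < e \<and> c \<le> ln (1 / e)"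
proof -
  have "\<forall>\<^sub>F e in at_right 0. c \<le> ln (1 / e)"
    using ln_inverse_at_top unfolding filterlim_at_top by blast
  then show ?thesis using eventually_conj[OF eventually_at_right_less[of 0]] by blast
qed

lemma card_separated_le_cover_power:
  fixes \<phi> :: "'g \<Rightarrow> 'x::metric_space \<Rightarrow> 'x"
  assumes C: "finite C" "X \<subseteq> (\<Union>c\<in>C. ball c (eps/2))"
    and A: "finite A" "A \<noteq> {}" "\<forall>g\<in>A. \<forall>x\<in>X. \<phi> g x \<in> X"
    and S: "S \<subseteq> X" "\<forall>x\<in>S. \<forall>y\<in>S. x \<noteq> y \<longrightarrow> dF \<phi> A x y > eps"
  shows "card S \<le> card C ^ card A"
proof -
  define code where "code x = (\<lambda>g\<in>A. SOME c. c \<in> C \<and> \<phi> g x \<in> ball c (eps/2))" for x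
  have code: "code x g \<in> C \<and> \<phi> g x \<in> ball (code x g) (eps/2)" if "x \<in> X" "g \<in> A" for x g
  proof -
    have "\<exists>c. c \<in> C \<and> \<phi> g x \<in> ball c (eps/2)" using A(3) C(2) that by blast
    then have "(SOME c. c \<in> C \<and> \<phi> g x \<in> ball c (eps/2)) \<in> C \<and>
        \<phi> g x \<in> ball (SOME c. c \<in> C \<and> \<phi> g x \<in> ball c (eps/2)) (eps/2)"
      by (rule someI_ex)
    then show ?thesis unfolding code_def using that(2) by simp
  qed
  have "inj_on code S"
  proof (rule inj_onI, rule ccontr)
    fix x y assume xy: "x \<in> S" "y \<in> S" "code x = code y" "x \<noteq> y"
    have "dF \<phi> A x y \<in> (\<lambda>g. dist (\<phi> g x) (\<phi> g y)) ` A"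
      unfolding dF_def using A by (intro Max_in) auto
    then obtain g where g: "g \<in> A" "dist (\<phi> g x) (\<phi> g y) > eps"
      using S(2) xy by fastforce
    have "\<phi> g x \<in> ball (code x g) (eps/2)" "\<phi> g y \<in> ball (code x g) (eps/2)"
      using code g(1) xy S(1) by (metis subsetD)+
    then have "dist (\<phi> g x) (\<phi> g y) < eps"
      by (metis dist_commute dist_triangle_half_r mem_ball)
    then show False using g by simp
  qed
  moreover have "code ` S \<subseteq> (\<Pi>\<^sub>E g\<in>A. C)"
    using code S(1) unfolding code_def by (auto simp: PiE_def)
  ultimately have "card S \<le> card (\<Pi>\<^sub>E g\<in>A. C)"
    by (intro card_inj_on_le) (simp_all add: finite_PiE A C)
  then show ?thesis by (simp add: card_PiE A)
qed

lemma (in group) sum_card_Int_l_coset_le: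
  assumes K: "finite K" "K \<subseteq> carrier G" and A: "finite A" "A \<subseteq> carrier G"
  shows "(\<Sum>g\<in>K. card (A \<inter> (g <# A))) \<le> card A * card A"
proof -
  let ?pairs = "SIGMA g:K. A \<inter> (g <# A)"
  have "(\<Sum>g\<in>K. card (A \<inter> (g <# A))) = card ?pairs"
    using K A by (subst card_SigmaI) auto
  also have "\<dots> \<le> card (A \<times> A)"
  proof (rule card_inj_on_le[where f = "\<lambda>(g, y). (inv g \<otimes> y, y)"])
    show "inj_on (\<lambda>(g, y). (inv g \<otimes> y, y)) ?pairs"
    proof (rule inj_onI, clarsimp)
      fix g g' y assume "g \<in> K" "g' \<in> K" "y \<in> A" "inv g \<otimes> y = inv g' \<otimes> y"
      then show "g = g'" using K A by (metis inv_closed inv_inv right_cancel subsetD)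
    qed
    show "(\<lambda>(g, y). (inv g \<otimes> y, y)) ` ?pairs \<subseteq> A \<times> A"
    proof clarsimp
      fix g y assume "g \<in> K" "y \<in> A" "y \<in> g <# A"
      then obtain x where "x \<in> A" "y = g \<otimes> x" unfolding l_coset_def by auto
      moreover have "g \<in> carrier G" "x \<in> carrier G" using \<open>g \<in> K\<close> \<open>x \<in> A\<close> K A by auto
      ultimately show "inv g \<otimes> y \<in> A" by (simp add: m_assoc[symmetric])
    qed
  qed (use A in simp)
  finally show ?thesis by (simp add: card_cartesian_product)
qed

lemma folner_eventually_card_ge:
  assumes G: "group G" and fol: "folner G F" and K: "finite K" "K \<subseteq> carrier G"
  shows "\<forall>\<^sub>F n in sequentially. real (card K) \<le> 2 * real (card (F n))"
proof -
  have F: "F n \<subseteq> carrier G" "finite (F n)" "F n \<noteq> {}" for n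
    using fol unfolding folner_def by auto
  have "\<forall>\<^sub>F n in sequentially. \<forall>g\<in>K.
      real (card (((g <#\<^bsub>G\<^esub> F n) - F n) \<union> (F n - (g <#\<^bsub>G\<^esub> F n)))) / real (card (F n)) < 1/2"
    using fol K unfolding folner_def by (intro eventually_ball_finite ballI order_tendstoD(2)) auto
  then show ?thesis
  proof (rule eventually_mono)
    fix n
    let ?A = "F n"
    assume small: "\<forall>g\<in>K. real (card (((g <#\<^bsub>G\<^esub> ?A) - ?A) \<union> (?A - (g <#\<^bsub>G\<^esub> ?A))))
        / real (card ?A) < 1/2"
    have card_A: "0 < real (card ?A)" using F[of n] by (simp add: card_gt_0_iff)
    have half: "real (card ?A) / 2 \<le> real (card (?A \<inter> (g <#\<^bsub>G\<^esub> ?A)))" if "g \<in> K" for g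
    proof -
      have "real (card (?A - (g <#\<^bsub>G\<^esub> ?A)))
          \<le> real (card (((g <#\<^bsub>G\<^esub> ?A) - ?A) \<union> (?A - (g <#\<^bsub>G\<^esub> ?A))))"
        using F[of n] by (intro of_nat_mono card_mono) (auto simp: l_coset_def)
      also have "\<dots> < real (card ?A) / 2" using small that card_A by (simp add: divide_less_eq)
      finally show ?thesis
        using card_Int_Diff[OF F(2)[of n], of "g <#\<^bsub>G\<^esub> ?A"] by simp
    qed
    have "real (card K) * (real (card ?A) / 2) \<le> (\<Sum>g\<in>K. real (card (?A \<inter> (g <#\<^bsub>G\<^esub> ?A))))"
      using sum_mono[OF half] by simp
    also have "\<dots> \<le> real (card ?A) * real (card ?A)"
      using group.sum_card_Int_l_coset_le[OF G K F(2,1)[of n]]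
      by (metis of_nat_le_iff of_nat_mult of_nat_sum)
    finally show "real (card K) \<le> 2 * real (card ?A)" using card_A by (simp add: field_simps)
  qed
qed

lemma folner_card_at_top:
  assumes "group G" "infinite (carrier G)" "folner G F"
  shows "filterlim (\<lambda>n. real (card (F n))) at_top sequentially"
  unfolding filterlim_at_top_dense
proof
  fix M :: real
  obtain K where K: "finite K" "card K = Suc (nat \<lceil>2 * M\<rceil>)" "K \<subseteq> carrier G"
    using infinite_arbitrarily_large[OF assms(2)] by blast
  have M: "2 * M < real (card K)" using K(2) by linarith
  show "\<forall>\<^sub>F n in sequentially. M < real (card (F n))"
    using folner_eventually_card_ge[OF assms(1,3) K(1,3)] by (rule eventually_mono) (use M in linarith)
qed

locale separation_setting =
  fixes \<phi> :: "'g \<Rightarrow> 'x::metric_space \<Rightarrow> 'x" and X Z :: "'x set" and F :: "nat \<Rightarrow> 'g set"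
  assumes compact_X: "compact X" and Z_subset_X: "Z \<subseteq> X" and Z_nonempty: "Z \<noteq> {}"
    and finite_F: "finite (F n)" and F_nonempty: "F n \<noteq> {}"
    and F_maps_X: "g \<in> F n \<Longrightarrow> x \<in> X \<Longrightarrow> \<phi> g x \<in> X"
begin

lemma card_F_ge_1: "1 \<le> real (card (F n))"
  using finite_F F_nonempty by (simp add: Suc_leI card_gt_0_iff)

definition sep_cards :: "'g set \<Rightarrow> real \<Rightarrow> real set" where
  "sep_cards A eps = {real (card S) | S. S \<subseteq> Z \<and> finite S \<and>
     (\<forall>x\<in>S. \<forall>y\<in>S. x \<noteq> y \<longrightarrow> dF \<phi> A x y > eps)}"

lemma sep_num_eq_Sup_sep_cards: "sep_num \<phi> A Z eps = Sup (sep_cards A eps)"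
  unfolding sep_num_def sep_cards_def ..

lemma one_in_sep_cards: "1 \<in> sep_cards A eps"
proof -
  obtain z where "z \<in> Z" using Z_nonempty by auto
  then have "real (card {z}) \<in> sep_cards A eps" unfolding sep_cards_def by blast
  then show ?thesis by simp
qed

lemma sep_cards_antimono:
  assumes "e1 \<le> e2"
  shows "sep_cards A e2 \<subseteq> sep_cards A e1"
proof
  fix v assume "v \<in> sep_cards A e2"
  then obtain S where S: "v = real (card S)" "S \<subseteq> Z" "finite S"
      "\<forall>x\<in>S. \<forall>y\<in>S. x \<noteq> y \<longrightarrow> dF \<phi> A x y > e2"
    unfolding sep_cards_def by blast
  then have "\<forall>x\<in>S. \<forall>y\<in>S. x \<noteq> y \<longrightarrow> dF \<phi> A x y > e1"
    using assms by (meson le_less_trans)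
  with S(1-3) show "v \<in> sep_cards A e1" unfolding sep_cards_def by blast
qed

lemma sep_cards_le_power:
  assumes "eps > 0"
  shows "\<exists>K\<ge>1. \<forall>n. \<forall>v\<in>sep_cards (F n) eps. v \<le> K ^ card (F n)"
proof -
  obtain C where C: "finite C" "C \<subseteq> X" "X \<subseteq> (\<Union>c\<in>C. ball c (eps/2))"
    using compactE_image[OF compact_X, of X "\<lambda>c. ball c (eps/2)"] \<open>eps > 0\<close>
    by (metis centre_in_ball half_gt_zero open_ball UN_I subsetI)
  have "C \<noteq> {}" using C(3) Z_subset_X Z_nonempty by auto
  then have "1 \<le> real (card C)" using C(1) by (simp add: Suc_leI card_gt_0_iff)
  moreover have "v \<le> real (card C) ^ card (F n)" if v: "v \<in> sep_cards (F n) eps" for n v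
  proof -
    obtain S where S: "v = real (card S)" "S \<subseteq> Z"
        "\<forall>x\<in>S. \<forall>y\<in>S. x \<noteq> y \<longrightarrow> dF \<phi> (F n) x y > eps"
      using v unfolding sep_cards_def by blast
    have "card S \<le> card C ^ card (F n)"
      using card_separated_le_cover_power[OF C(1,3) finite_F F_nonempty _ _ S(3)]
        F_maps_X S(2) Z_subset_X by blast
    then show ?thesis using S(1) by (metis of_nat_le_iff of_nat_power)
  qed
  ultimately show ?thesis by blast
qed

lemma bdd_above_sep_cards: "eps > 0 \<Longrightarrow> bdd_above (sep_cards (F n) eps)"
  using sep_cards_le_power unfolding bdd_above_def by blast

lemma sep_num_ge_1: "eps > 0 \<Longrightarrow> 1 \<le> sep_num \<phi> (F n) Z eps"
  unfolding sep_num_eq_Sup_sep_cards by (intro cSup_upper one_in_sep_cards bdd_above_sep_cards)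

lemma ln_sep_num_nonneg: "eps > 0 \<Longrightarrow> 0 \<le> ln (sep_num \<phi> (F n) Z eps)"
  using sep_num_ge_1 by simp

lemma sep_num_antimono:
  assumes "0 < e1" "e1 \<le> e2"
  shows "sep_num \<phi> (F n) Z e2 \<le> sep_num \<phi> (F n) Z e1"
  unfolding sep_num_eq_Sup_sep_cards
  using one_in_sep_cards bdd_above_sep_cards[OF assms(1)] sep_cards_antimono[OF assms(2)]
  by (intro cSup_subset_mono) blast+

lemma ln_sep_num_le_linear:
  assumes "eps > 0"
  shows "\<exists>K\<ge>0. \<forall>n. ln (sep_num \<phi> (F n) Z eps) \<le> K * real (card (F n))"
proof -
  obtain K where K: "1 \<le> K" "\<forall>n. \<forall>v\<in>sep_cards (F n) eps. v \<le> K ^ card (F n)"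
    using sep_cards_le_power[OF assms] by blast
  have "ln (sep_num \<phi> (F n) Z eps) \<le> ln K * real (card (F n))" for n
  proof -
    have "sep_num \<phi> (F n) Z eps \<le> K ^ card (F n)"
      unfolding sep_num_eq_Sup_sep_cards using one_in_sep_cards K(2) by (intro cSup_least) blast+
    then have "ln (sep_num \<phi> (F n) Z eps) \<le> ln (K ^ card (F n))"
      using sep_num_ge_1[OF assms, of n] by (intro ln_mono) auto
    also have "\<dots> = ln K * real (card (F n))" using K(1) by (simp add: ln_realpow)
    finally show ?thesis .
  qed
  moreover have "0 \<le> ln K" using K(1) by simp
  ultimately show ?thesis by blast
qed

lemma htop_eps_finite_nonneg:
  assumes "eps > 0"
  shows "\<exists>r\<ge>0. htop_eps \<phi> F Z eps = ereal r"
proof -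
  obtain K where K: "\<And>n. ln (sep_num \<phi> (F n) Z eps) \<le> K * real (card (F n))"
    using ln_sep_num_le_linear[OF assms] by blast
  let ?f = "\<lambda>n. ereal (ln (sep_num \<phi> (F n) Z eps) / real (card (F n)))"
  have "0 \<le> ?f n" for n
    using ln_sep_num_nonneg[OF assms] card_F_ge_1[of n] by simp
  then have "0 \<le> limsup ?f" by (intro le_Limsup) auto
  moreover have "?f n \<le> ereal K" for n
    using K[of n] card_F_ge_1[of n] by (simp add: divide_le_eq)
  then have "limsup ?f \<le> ereal K" by (intro Limsup_bounded) auto
  ultimately show ?thesis unfolding htop_eps_def by (cases "limsup ?f") auto
qed

lemma htop_eps_antimono:
  assumes "0 < e1" "e1 \<le> e2"
  shows "htop_eps \<phi> F Z e2 \<le> htop_eps \<phi> F Z e1"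
  unfolding htop_eps_def
proof (intro Limsup_mono always_eventually allI)
  fix n
  have "ln (sep_num \<phi> (F n) Z e2) \<le> ln (sep_num \<phi> (F n) Z e1)"
    using sep_num_antimono[OF assms] sep_num_ge_1[of e2 n] assms by (intro ln_mono) auto
  then show "ereal (ln (sep_num \<phi> (F n) Z e2) / real (card (F n)))
      \<le> ereal (ln (sep_num \<phi> (F n) Z e1) / real (card (F n)))"
    using card_F_ge_1[of n] by (simp add: divide_right_mono)
qed

lemma htop_eq_SUP_htop_eps: "htop \<phi> F Z = (SUP e\<in>{0<..}. htop_eps \<phi> F Z e)"
  unfolding htop_def
  by (intro tendsto_Lim tendsto_at_right_SUP_antimono htop_eps_antimono) simp_all

lemma tendsto_htop_eps: "(htop_eps \<phi> F Z \<longlongrightarrow> htop \<phi> F Z) (at_right 0)"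
  unfolding htop_eq_SUP_htop_eps by (intro tendsto_at_right_SUP_antimono htop_eps_antimono)

definition htop_eps_real :: "real \<Rightarrow> real" where
  "htop_eps_real eps = real_of_ereal (htop_eps \<phi> F Z eps)"

lemma htop_eps_eq_ereal: "eps > 0 \<Longrightarrow> htop_eps \<phi> F Z eps = ereal (htop_eps_real eps)"
  using htop_eps_finite_nonneg unfolding htop_eps_real_def by force

lemma htop_eps_real_nonneg: "eps > 0 \<Longrightarrow> 0 \<le> htop_eps_real eps"
  using htop_eps_finite_nonneg unfolding htop_eps_real_def by force

lemma mdim_M_s_eq_Limsup_real:
  "mdim_M_s \<phi> F Z s = Limsup (at_right 0) (\<lambda>e. ereal (htop_eps_real e / ln (1 / e) powr s))"
  unfolding mdim_M_s_def
proof (rule Limsup_eq)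
  show "\<forall>\<^sub>F e in at_right 0.
      htop_eps \<phi> F Z e / ereal (ln (1 / e) powr s) = ereal (htop_eps_real e / ln (1 / e) powr s)"
    using eventually_at_right_0_ln_inverse_ge[of 1]
  proof eventually_elim
    case (elim e)
    define L where "L = ln (1 / e)"
    have "L powr s \<noteq> 0" using elim unfolding L_def[symmetric] by simp
    then show ?case using elim unfolding L_def[symmetric] by (simp add: htop_eps_eq_ereal)
  qed
qed

lemma mdim_M_eq_mdim_M_s_1: "mdim_M \<phi> F Z = mdim_M_s \<phi> F Z 1"
  unfolding mdim_M_def mdim_M_s_def
proof (rule Limsup_eq)
  show "\<forall>\<^sub>F e in at_right 0.
      htop_eps \<phi> F Z e / ereal (ln (1 / e)) = htop_eps \<phi> F Z e / ereal (ln (1 / e) powr 1)"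
    using eventually_at_right_0_ln_inverse_ge[of 1]
  proof eventually_elim
    case (elim e)
    define L where "L = ln (1 / e)"
    have "0 \<le> L" using elim unfolding L_def[symmetric] by simp
    then show ?case unfolding L_def[symmetric] by simp
  qed
qed

lemma mdim_M_s_antimono:
  assumes "s \<le> t"
  shows "mdim_M_s \<phi> F Z t \<le> mdim_M_s \<phi> F Z s"
  unfolding mdim_M_s_eq_Limsup_real
proof (intro Limsup_mono)
  show "\<forall>\<^sub>F e in at_right 0.
      ereal (htop_eps_real e / ln (1 / e) powr t) \<le> ereal (htop_eps_real e / ln (1 / e) powr s)"
    using eventually_at_right_0_ln_inverse_ge[of 1]
  proof eventually_elim
    case (elim e)
    then have "ln (1 / e) powr s \<le> ln (1 / e) powr t" using assms by (intro powr_mono) auto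
    then show ?case using elim htop_eps_real_nonneg[of e] by (auto intro!: divide_left_mono mult_pos_pos)
  qed
qed

lemma mdim_M_s_0_le_htop: "mdim_M_s \<phi> F Z 0 \<le> htop \<phi> F Z"
  unfolding mdim_M_s_def
proof (rule Limsup_bounded)
  show "\<forall>\<^sub>F e in at_right 0. htop_eps \<phi> F Z e / ereal (ln (1 / e) powr 0) \<le> htop \<phi> F Z"
    using eventually_at_right_0_ln_inverse_ge[of 1]
    by eventually_elim (auto simp: htop_eq_SUP_htop_eps one_ereal_def[symmetric] intro: SUP_upper)
qed

lemma mdim_M_s_eq_0_if_finite_below:
  assumes fin: "mdim_M_s \<phi> F Z s < \<infinity>" and "s < t"
  shows "mdim_M_s \<phi> F Z t = 0"
proof -
  obtain B :: real where "mdim_M_s \<phi> F Z s < ereal B"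
    using fin by (meson ereal_dense2)
  then have "\<forall>\<^sub>F e in at_right 0. htop_eps_real e / ln (1 / e) powr s < B"
    using Limsup_lessD unfolding mdim_M_s_eq_Limsup_real by fastforce
  then have "\<forall>\<^sub>F e in at_right 0. 0 \<le> htop_eps_real e / ln (1 / e) powr t \<and>
      htop_eps_real e / ln (1 / e) powr t \<le> B * ln (1 / e) powr (s - t)"
    using eventually_at_right_0_ln_inverse_ge[of 1]
  proof eventually_elim
    case (elim e)
    have "htop_eps_real e / ln (1 / e) powr t
        = htop_eps_real e / ln (1 / e) powr s * ln (1 / e) powr (s - t)"
      using elim by (simp add: powr_diff)
    also have "\<dots> \<le> B * ln (1 / e) powr (s - t)" using elim by (intro mult_right_mono) auto
    finally show ?case using elim htop_eps_real_nonneg[of e] by simp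
  qed
  moreover have "((\<lambda>e. B * ln (1 / e) powr (s - t)) \<longlongrightarrow> 0) (at_right 0)"
    using \<open>s < t\<close> by (intro tendsto_mult_right_zero tendsto_neg_powr ln_inverse_at_top) simp
  ultimately show ?thesis
    unfolding mdim_M_s_eq_Limsup_real by (intro Limsup_ereal_eq_0_if_squeezed) simp_all
qed

lemma htop_s_eq_infinity:
  assumes "htop \<phi> F Z = \<infinity>" "s \<le> 1"
  shows "htop_s \<phi> F Z s = \<infinity>"
proof -
  let ?g = "\<lambda>eps. limsup (\<lambda>n. ereal (ln (sep_num \<phi> (F n) Z eps) / real (card (F n)) powr s))"
  have "htop_eps \<phi> F Z eps \<le> ?g eps" if "eps > 0" for eps
    unfolding htop_eps_def
  proof (intro Limsup_mono always_eventually allI)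
    fix n
    have "real (card (F n)) powr s \<le> real (card (F n)) powr 1"
      using card_F_ge_1[of n] \<open>s \<le> 1\<close> by (intro powr_mono) auto
    then show "ereal (ln (sep_num \<phi> (F n) Z eps) / real (card (F n)))
        \<le> ereal (ln (sep_num \<phi> (F n) Z eps) / real (card (F n)) powr s)"
      using card_F_ge_1[of n] ln_sep_num_nonneg[OF that] by (auto intro!: divide_left_mono)
  qed
  then have "\<forall>\<^sub>F eps in at_right 0. htop_eps \<phi> F Z eps \<le> ?g eps"
    using eventually_at_right_less[of 0] by (auto elim: eventually_mono)
  then have "(?g \<longlongrightarrow> \<infinity>) (at_right 0)"
    by (rule tendsto_sandwich[OF _ _ tendsto_htop_eps[unfolded assms(1)] tendsto_const]) simp
  then show ?thesis unfolding htop_s_def by (intro tendsto_Lim) simp_all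
qed

lemma htop_s_eq_0:
  assumes card_F: "filterlim (\<lambda>n. real (card (F n))) at_top sequentially" and "1 < s"
  shows "htop_s \<phi> F Z s = 0"
proof -
  have "limsup (\<lambda>n. ereal (ln (sep_num \<phi> (F n) Z eps) / real (card (F n)) powr s)) = 0"
    if eps: "eps > 0" for eps
  proof -
    obtain K where K: "\<forall>n. ln (sep_num \<phi> (F n) Z eps) \<le> K * real (card (F n))"
      using ln_sep_num_le_linear[OF eps] by blast
    have "ln (sep_num \<phi> (F n) Z eps) / real (card (F n)) powr s
        \<le> K * real (card (F n)) powr (1 - s)" for n
    proof -
      have "ln (sep_num \<phi> (F n) Z eps) / real (card (F n)) powr s
          \<le> K * (real (card (F n)) powr 1 / real (card (F n)) powr s)"
        using K card_F_ge_1[of n] by (simp add: divide_right_mono)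
      also have "\<dots> = K * real (card (F n)) powr (1 - s)" by (simp add: powr_diff)
      finally show ?thesis .
    qed
    moreover have "((\<lambda>n. K * real (card (F n)) powr (1 - s)) \<longlongrightarrow> 0) sequentially"
      using \<open>1 < s\<close> by (intro tendsto_mult_right_zero tendsto_neg_powr card_F) simp
    ultimately show ?thesis
      using ln_sep_num_nonneg[OF eps] by (intro Limsup_ereal_eq_0_if_squeezed) simp_all
  qed
  then show ?thesis unfolding htop_s_def
    by (intro tendsto_Lim) (simp_all add: tendsto_eventually eventually_mono[OF eventually_at_right_less])
qed

lemma htop_eq_infinity_if_mdim_M_pos:
  assumes "0 < mdim_M \<phi> F Z"
  shows "htop \<phi> F Z = \<infinity>"
proof (rule ccontr)
  assume "htop \<phi> F Z \<noteq> \<infinity>"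
  then have "mdim_M_s \<phi> F Z 0 < \<infinity>"
    using mdim_M_s_0_le_htop by (metis ereal_less_PInfty le_less_trans less_PInf_Ex_of_nat)
  then have "mdim_M \<phi> F Z = 0"
    using mdim_M_s_eq_0_if_finite_below[of 0 1] by (simp add: mdim_M_eq_mdim_M_s_1)
  then show False using assms by simp
qed

lemma D_M_le_1:
  assumes "mdim_M \<phi> F Z < \<infinity>"
  shows "D_M \<phi> F Z \<le> 1"
  unfolding D_M_def one_ereal_def
  using assms mdim_M_s_eq_0_if_finite_below[of 1]
  by (intro Inf_ereal_le_if_Ioi_subset) (auto simp: mdim_M_eq_mdim_M_s_1)

lemma one_le_D_M:
  assumes "0 < mdim_M \<phi> F Z"
  shows "1 \<le> D_M \<phi> F Z"
  unfolding D_M_def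
proof (rule Inf_greatest, clarify)
  fix s assume "0 < s" "mdim_M_s \<phi> F Z s = 0"
  then have "\<not> s < 1"
    using mdim_M_s_antimono[of s 1] assms by (auto simp: mdim_M_eq_mdim_M_s_1)
  then show "1 \<le> ereal s" by simp
qed

lemma one_le_entropy_dim:
  assumes "htop \<phi> F Z = \<infinity>"
  shows "1 \<le> entropy_dim \<phi> F Z"
  unfolding entropy_dim_def
proof (rule Inf_greatest, clarify)
  fix s assume "0 < s" "htop_s \<phi> F Z s = 0"
  then show "1 \<le> ereal s" using htop_s_eq_infinity[OF assms, of s] by (cases "1 \<le> s") auto
qed

lemma entropy_dim_le_1:
  assumes "filterlim (\<lambda>n. real (card (F n))) at_top sequentially"
  shows "entropy_dim \<phi> F Z \<le> 1"
  unfolding entropy_dim_def one_ereal_def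
  using htop_s_eq_0[OF assms] by (intro Inf_ereal_le_if_Ioi_subset) auto

end

theorem mainTheorem12:
  fixes G :: "('g, 'b) monoid_scheme"
    and \<phi> :: "'g \<Rightarrow> 'x::metric_space \<Rightarrow> 'x"
    and X Z :: "'x set"
    and F :: "nat \<Rightarrow> 'g set"
  assumes "group G" and "countable (carrier G)" and "infinite (carrier G)" and "amenable G"
    and "compact X"
    and "group_action G X \<phi>"
    and "\<forall>g\<in>carrier G. continuous_on X (\<phi> g)"
    and "folner G F"
    and "Z \<subseteq> X" and "Z \<noteq> {}"
  shows "(htop \<phi> F Z = \<infinity> \<and> mdim_M \<phi> F Z < \<infinity> \<longrightarrow>
            D_M \<phi> F Z \<le> 1 \<and> 1 \<le> entropy_dim \<phi> F Z)
       \<and> (0 < mdim_M \<phi> F Z \<and> mdim_M \<phi> F Z < \<infinity> \<longrightarrow>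
            D_M \<phi> F Z = 1 \<and> entropy_dim \<phi> F Z = 1)"
proof -
  have F: "F n \<subseteq> carrier G" "finite (F n)" "F n \<noteq> {}" for n
    using assms(8) unfolding folner_def by auto
  interpret separation_setting \<phi> X Z F
  proof
    show "compact X" "Z \<subseteq> X" "Z \<noteq> {}" by (fact assms)+
    show "finite (F n)" "F n \<noteq> {}" for n by (fact F)+
    show "\<phi> g x \<in> X" if "g \<in> F n" "x \<in> X" for n g x
      using group_action.element_image[OF assms(6), of g x "\<phi> g x"] F(1)[of n] that by blast
  qed
  have "entropy_dim \<phi> F Z \<le> 1"
    using entropy_dim_le_1 folner_card_at_top[OF assms(1,3,8)] by blast
  then show ?thesis
    using D_M_le_1 one_le_D_M one_le_entropy_dim htop_eq_infinity_if_mdim_M_pos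
    by (auto intro: antisym)
qed

end
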